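(* Let $\langle \mathbf{A},\{N_x\}_{x\in A}\rangle$ be a complete saturated $C_\omega$-structure, and let $\mathbf{V}^{\langle \mathbf{A},N\rangle}$ be a standard Leibniz model over it. Then $\mathbf{V}^{\langle \mathbf{A},N\rangle}$ verifies the Leibniz law: for every formula $\varphi(x)$ of $\mathcal{L}_{\langle \mathbf{A},N\rangle}$ with one free variable $x$ and all $u,v\in \mathbf{V}^{\langle \mathbf{A},N\rangle}$, $$\|u\approx v\|\wedge\|\varphi(u)\|\le\|\varphi(v)\|,$$ equivalently $\|(u\approx v\wedge\varphi(u))\to\varphi(v)\|=1$.
   Context: A generalized Heyting algebra is a distributive lattice $\langle B,\vee,\wedge,1\rangle$ with greatest element $1$ and a binary operation $\to$ such that $a\to b$ is the greatest $c$ with $a\wedge c\le b$. A $C_\omega$-structure is a pair $\langle \mathbf{A},\{N_x\}_{x\in A}\rangle$ where $\mathbf{A}$ is a generalized Heyting algebra and each $N_x\subseteq A$, such that (i) for every $x\in A$ there is $x'\in N_x$ with $x\vee x'=1$, and (ii) for every $x'\in N_x$ there is $x''\in N_{x'}$ with $x''\le x$. It is complete if $\mathbf{A}$ is a complete lattice (then $\mathbf{A}$ has a least element $0$ and is a complete Heyting algebra), and saturated if $N_x=\{y\in A: x\vee y=1\}$ for every $x\in A$ (so $1\in N_x$ for all $x$ and $N_1=A$). Fix a model $\mathbf{V}$ of set theory. By transfinite recursion let $\mathbf{V}^{\langle \mathbf{A},N\rangle}_\xi$ be the set of all functions $x$ with $\mathrm{ran}(x)\subseteq A$ and $\mathrm{dom}(x)\subseteq\mathbf{V}^{\langle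 \mathbf{A},N\rangle}_\zeta$ for some $\zeta<\xi$, and $\mathbf{V}^{\langle \mathbf{A},N\rangle}=\bigcup_\xi\mathbf{V}^{\langle \mathbf{A},N\rangle}_\xi$. The language $\mathcal{L}_{\langle \mathbf{A},N\rangle}$ is first-order with connectives $\wedge,\vee,\to,\neg$, quantifiers $\exists,\forall$, binary predicates $\in,\approx$, and a constant for each element of $\mathbf{V}^{\langle \mathbf{A},N\rangle}$. A truth-value map $\|\cdot\|$ from sentences to $A$ satisfies: $\|u\in v\|=\bigvee_{x\in\mathrm{dom}(v)}(v(x)\wedge\|x\approx u\|)$; $\|u\approx v\|=\bigwedge_{x\in\mathrm{dom}(u)}(u(x)\to\|x\in v\|)\wedge\bigwedge_{x\in\mathrm{dom}(v)}(v(x)\to\|x\in u\|)$; $\|\varphi\#\psi\|=\|\varphi\|\#\|\psi\|$ for $\#\in\{\wedge,\vee,\to\}$; $\|\neg\alpha\|\in N_{\|\alpha\|}$ and $\|\neg\neg\alpha\|\le\|\alpha\|$; $\|\exists x\varphi\|=\bigvee_{u\in\mathbf{V}^{\langle \mathbf{A},N\rangle}}\|\varphi(u)\|$, $\|\forall x\varphi\|=\bigwedge_{u\in\mathbf{V}^{\langle \mathbf{A},N\rangle}}\|\varphi(u)\|$. A standard Leibniz model over a complete saturated $C_\omega$-structure is $\mathbf{V}^{\langle \mathbf{A},N\rangle}$ with the truth-value map of this kind in which, for every sentence $\psi$ not of the form $\neg\phi$, $\|\neg\psi\|=1$ and $\|\neg\neg\psi\|=\|\psi\|$; consequently, if $\psi$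 (not of the form $\neg\phi$) is preceded by an odd number of negations the value is $1$, and by an even number the value is $\|\psi\|$. *)

theory Defs
  imports Main
begin

text \<open>The algebra A is the whole carrier of a type 'a of class complete_lattice.
  The Heyting implication a -> b is the greatest c with a meet c below b.\<close>

definition himp :: "'a::complete_lattice \<Rightarrow> 'a \<Rightarrow> 'a" where
  "himp a b = Sup {c. inf a c \<le> b}"

definition gen_heyting :: "'a::complete_lattice itself \<Rightarrow> bool" where
  "gen_heyting _ \<longleftrightarrow>
     (\<forall>a b c::'a. inf a (sup b c) = sup (inf a b) (inf a c)) \<and>
     (\<forall>a b::'a. inf a (himp a b) \<le> b)"

definition C_omega :: "('a::complete_lattice \<Rightarrow> 'a set) \<Rightarrow> bool" where
  "C_omega N \<longleftrightarrow> gen_heyting TYPE('a) \<and>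
     (\<forall>x. \<exists>x'\<in>N x. sup x x' = top) \<and>
     (\<forall>x. \<forall>x'\<in>N x. \<exists>x''\<in>N x'. x'' \<le> x)"

definition saturated :: "('a::complete_lattice \<Rightarrow> 'a set) \<Rightarrow> bool" where
  "saturated N \<longleftrightarrow> (\<forall>x. N x = {y. sup x y = top})"

text \<open>A system of names: a set U of names; each name u is a function with
  domain dm u (a set of names) and values val u x in A.  The membership
  relation "x in dm u" is well-founded (the hierarchy V_xi).\<close>

definition name_system :: "'n set \<Rightarrow> ('n \<Rightarrow> 'n set) \<Rightarrow> ('n \<Rightarrow> 'n \<Rightarrow> 'a) \<Rightarrow> bool" where
  "name_system U dm val \<longleftrightarrow>
     (\<forall>u\<in>U. dm u \<subseteq> U) \<and> wf {(x, u). u \<in> U \<and> x \<in> dm u}"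

datatype 'n trm = Var nat | Cst 'n

datatype 'n fm =
    Mem "'n trm" "'n trm"
  | Eqv "'n trm" "'n trm"
  | Conj "'n fm" "'n fm"
  | Disj "'n fm" "'n fm"
  | Impl "'n fm" "'n fm"
  | Neg "'n fm"
  | Ex nat "'n fm"
  | All nat "'n fm"

fun tvars :: "'n trm \<Rightarrow> nat set" where
  "tvars (Var i) = {i}" | "tvars (Cst _) = {}"

fun tconsts :: "'n trm \<Rightarrow> 'n set" where
  "tconsts (Var _) = {}" | "tconsts (Cst c) = {c}"

fun freevars :: "'n fm \<Rightarrow> nat set" where
  "freevars (Mem s t) = tvars s \<union> tvars t"
| "freevars (Eqv s t) = tvars s \<union> tvars t"
| "freevars (Conj p q) = freevars p \<union> freevars q"
| "freevars (Disj p q) = freevars p \<union> freevars q"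
| "freevars (Impl p q) = freevars p \<union> freevars q"
| "freevars (Neg p) = freevars p"
| "freevars (Ex i p) = freevars p - {i}"
| "freevars (All i p) = freevars p - {i}"

fun fconsts :: "'n fm \<Rightarrow> 'n set" where
  "fconsts (Mem s t) = tconsts s \<union> tconsts t"
| "fconsts (Eqv s t) = tconsts s \<union> tconsts t"
| "fconsts (Conj p q) = fconsts p \<union> fconsts q"
| "fconsts (Disj p q) = fconsts p \<union> fconsts q"
| "fconsts (Impl p q) = fconsts p \<union> fconsts q"
| "fconsts (Neg p) = fconsts p"
| "fconsts (Ex i p) = fconsts p"
| "fconsts (All i p) = fconsts p"

fun tsubst :: "nat \<Rightarrow> 'n \<Rightarrow> 'n trm \<Rightarrow> 'n trm" where
  "tsubst x u (Var i) = (if i = x then Cst u else Var i)"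
| "tsubst x u (Cst c) = Cst c"

fun subst :: "nat \<Rightarrow> 'n \<Rightarrow> 'n fm \<Rightarrow> 'n fm" where
  "subst x u (Mem s t) = Mem (tsubst x u s) (tsubst x u t)"
| "subst x u (Eqv s t) = Eqv (tsubst x u s) (tsubst x u t)"
| "subst x u (Conj p q) = Conj (subst x u p) (subst x u q)"
| "subst x u (Disj p q) = Disj (subst x u p) (subst x u q)"
| "subst x u (Impl p q) = Impl (subst x u p) (subst x u q)"
| "subst x u (Neg p) = Neg (subst x u p)"
| "subst x u (Ex i p) = (if i = x then Ex i p else Ex i (subst x u p))"
| "subst x u (All i p) = (if i = x then All i p else All i (subst x u p))"

definition sentence :: "'n set \<Rightarrow> 'n fm \<Rightarrow> bool" where
  "sentence U p \<longleftrightarrow> freevars p = {} \<and> fconsts p \<subseteq> U"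

fun is_neg :: "'n fm \<Rightarrow> bool" where
  "is_neg (Neg _) = True" | "is_neg _ = False"

definition truth_map ::
  "('a::complete_lattice \<Rightarrow> 'a set) \<Rightarrow> 'n set \<Rightarrow> ('n \<Rightarrow> 'n set) \<Rightarrow> ('n \<Rightarrow> 'n \<Rightarrow> 'a)
   \<Rightarrow> ('n fm \<Rightarrow> 'a) \<Rightarrow> bool" where
  "truth_map N U dm val tv \<longleftrightarrow>
     (\<forall>u\<in>U. \<forall>v\<in>U. tv (Mem (Cst u) (Cst v)) =
         (SUP x\<in>dm v. inf (val v x) (tv (Eqv (Cst x) (Cst u))))) \<and>
     (\<forall>u\<in>U. \<forall>v\<in>U. tv (Eqv (Cst u) (Cst v)) =
         inf (INF x\<in>dm u. himp (val u x) (tv (Mem (Cst x) (Cst v))))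
             (INF x\<in>dm v. himp (val v x) (tv (Mem (Cst x) (Cst u))))) \<and>
     (\<forall>p q. sentence U p \<longrightarrow> sentence U q \<longrightarrow>
         tv (Conj p q) = inf (tv p) (tv q) \<and>
         tv (Disj p q) = sup (tv p) (tv q) \<and>
         tv (Impl p q) = himp (tv p) (tv q)) \<and>
     (\<forall>p. sentence U p \<longrightarrow> tv (Neg p) \<in> N (tv p) \<and> tv (Neg (Neg p)) \<le> tv p) \<and>
     (\<forall>i p. sentence U (Ex i p) \<longrightarrow> tv (Ex i p) = (SUP u\<in>U. tv (subst i u p))) \<and>
     (\<forall>i p. sentence U (All i p) \<longrightarrow> tv (All i p) = (INF u\<in>U. tv (subst i u p)))"

definition standard_leibniz ::
  "('a::complete_lattice \<Rightarrow> 'a set) \<Rightarrow> 'n set \<Rightarrow> ('n \<Rightarrow> 'n set) \<Rightarrow> ('n \<Rightarrow> 'n \<Rightarrow> 'a)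
   \<Rightarrow> ('n fm \<Rightarrow> 'a) \<Rightarrow> bool" where
  "standard_leibniz N U dm val tv \<longleftrightarrow>
     C_omega N \<and> saturated N \<and> name_system U dm val \<and> truth_map N U dm val tv \<and>
     (\<forall>p n. sentence U p \<longrightarrow> \<not> is_neg p \<longrightarrow>
        tv ((Neg ^^ n) p) = (if odd n then top else tv p))"

end

theory Submission
  imports Defs
begin

text \<open>By well-founded induction on names, the value of \<open>\<approx>\<close> is reflexive, symmetric and
  transitive, and \<open>\<in>\<close> respects it on both sides; the key tool is the infinite distributivity
  \<open>a \<sqinter> \<Squnion>S = \<Squnion>{a \<sqinter> s | s \<in> S}\<close>, which holds because \<open>a \<sqinter> -\<close> has the right adjoint \<open>a \<rightarrow> -\<close>.
  The Leibniz law then follows by induction on the size of the formula: conjunction,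
  disjunction and the quantifiers are monotone, the antecedent of an implication is handled
  by symmetry of \<open>\<approx>\<close>, and in a standard Leibniz model a formula \<open>\<not>\<^sup>n\<psi>\<close> has value \<open>1\<close> or
  \<open>\<parallel>\<psi>\<parallel>\<close>, so negations reduce to the smaller formula \<open>\<psi>\<close>.\<close>

lemma himp_greatest: "inf a c \<le> b \<Longrightarrow> c \<le> himp a b"
  unfolding himp_def by (rule Sup_upper) simp

lemma gen_heyting_inf_himp_le:
  "gen_heyting TYPE('a::complete_lattice) \<Longrightarrow> inf (a::'a) (himp a b) \<le> b"
  unfolding gen_heyting_def by blast

lemma gen_heyting_inf_sup_distrib:
  "gen_heyting TYPE('a::complete_lattice) \<Longrightarrow> inf (a::'a) (sup b c) = sup (inf a b) (inf a c)"
  unfolding gen_heyting_def by blast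

lemma gen_heyting_inf_SUP_le:
  assumes "gen_heyting TYPE('a::complete_lattice)"
  shows "inf (a::'a) (SUP x\<in>S. f x) \<le> (SUP x\<in>S. inf a (f x))"
proof -
  have "(SUP x\<in>S. f x) \<le> himp a (SUP x\<in>S. inf a (f x))"
    by (intro SUP_least himp_greatest SUP_upper)
  then have "inf a (SUP x\<in>S. f x) \<le> inf a (himp a (SUP x\<in>S. inf a (f x)))"
    by (rule inf_mono[OF order_refl])
  also have "\<dots> \<le> (SUP x\<in>S. inf a (f x))"
    using assms by (rule gen_heyting_inf_himp_le)
  finally show ?thesis .
qed

lemma tsubst_simps [simp]:
  "tvars (tsubst x u t) = tvars t - {x}"
  "x \<notin> tvars t \<Longrightarrow> tsubst x u t = t"
  "size (tsubst x u t) = size t"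
  by (cases t; auto)+

lemma subst_freevars: "freevars (subst x u p) = freevars p - {x}"
  by (induction p) auto

lemma subst_fconsts: "fconsts (subst x u p) \<subseteq> fconsts p \<union> {u}"
proof (induction p)
  case (Mem s t) then show ?case by (cases s; cases t) auto
next
  case (Eqv s t) then show ?case by (cases s; cases t) auto
qed auto

lemma subst_sentence:
  "freevars p \<subseteq> {x} \<Longrightarrow> fconsts p \<subseteq> U \<Longrightarrow> w \<in> U \<Longrightarrow> sentence U (subst x w p)"
  unfolding sentence_def using subst_freevars[of x w p] subst_fconsts[of x w p] by auto

lemma subst_not_free: "x \<notin> freevars p \<Longrightarrow> subst x u p = p"
  by (induction p) auto

lemma subst_commute: "i \<noteq> x \<Longrightarrow> subst i w (subst x u p) = subst x u (subst i w p)"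
proof (induction p)
  case (Mem s t) then show ?case by (cases s; cases t) auto
next
  case (Eqv s t) then show ?case by (cases s; cases t) auto
qed auto

lemma size_subst: "size (subst x u p) = size p"
  by (induction p) auto

lemma subst_Neg_funpow: "subst x u ((Neg ^^ n) q) = (Neg ^^ n) (subst x u q)"
  by (induction n) auto

lemma is_neg_subst: "is_neg (subst x u q) = is_neg q"
  by (cases q) auto

lemma Neg_funpow_simps [simp]:
  "freevars ((Neg ^^ n) q) = freevars q"
  "fconsts ((Neg ^^ n) q) = fconsts q"
  "size ((Neg ^^ n) q) = size q + n"
  by (induction n) auto

lemma Neg_funpow_decomp: "\<exists>n q. p = (Neg ^^ n) q \<and> \<not> is_neg q"
proof (induction p)
  case (Neg p)
  then obtain n q where "p = (Neg ^^ n) q" "\<not> is_neg q" by blast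
  then have "Neg p = (Neg ^^ Suc n) q \<and> \<not> is_neg q" by simp
  then show ?case by blast
qed (rule exI[of _ 0], simp)+

locale heyting_valued_model =
  fixes N :: "'a::complete_lattice \<Rightarrow> 'a set"
    and U :: "'n set" and dm :: "'n \<Rightarrow> 'n set" and val :: "'n \<Rightarrow> 'n \<Rightarrow> 'a"
    and tv :: "'n fm \<Rightarrow> 'a"
  assumes heyting: "gen_heyting TYPE('a)"
    and names: "name_system U dm val"
    and truth: "truth_map N U dm val tv"
begin

abbreviation eqv :: "'n \<Rightarrow> 'n \<Rightarrow> 'a" where
  "eqv u v \<equiv> tv (Eqv (Cst u) (Cst v))"

abbreviation mem :: "'n \<Rightarrow> 'n \<Rightarrow> 'a" where
  "mem u v \<equiv> tv (Mem (Cst u) (Cst v))"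

lemma tv_Mem: "u \<in> U \<Longrightarrow> v \<in> U \<Longrightarrow> mem u v = (SUP x\<in>dm v. inf (val v x) (eqv x u))"
  using truth unfolding truth_map_def by blast

lemma tv_Eqv: "u \<in> U \<Longrightarrow> v \<in> U \<Longrightarrow> eqv u v =
    inf (INF x\<in>dm u. himp (val u x) (mem x v)) (INF x\<in>dm v. himp (val v x) (mem x u))"
  using truth unfolding truth_map_def by blast

lemma tv_connectives:
  assumes "freevars a \<union> freevars b \<subseteq> {x}" "fconsts a \<union> fconsts b \<subseteq> U" "w \<in> U"
  shows "tv (subst x w (Conj a b)) = inf (tv (subst x w a)) (tv (subst x w b))"
    and "tv (subst x w (Disj a b)) = sup (tv (subst x w a)) (tv (subst x w b))"
    and "tv (subst x w (Impl a b)) = himp (tv (subst x w a)) (tv (subst x w b))"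
  using truth subst_sentence[of a x U w] subst_sentence[of b x U w] assms
  unfolding truth_map_def by auto

lemma tv_quantifiers:
  assumes "i \<noteq> x" "freevars p - {i} \<subseteq> {x}" "fconsts p \<subseteq> U" "w \<in> U"
  shows "tv (subst x w (Ex i p)) = (SUP y\<in>U. tv (subst x w (subst i y p)))"
    and "tv (subst x w (All i p)) = (INF y\<in>U. tv (subst x w (subst i y p)))"
  using truth subst_sentence[of "Ex i p" x U w] subst_sentence[of "All i p" x U w] assms
  unfolding truth_map_def by (auto simp: subst_commute)

lemma dm_in_U: "u \<in> U \<Longrightarrow> x \<in> dm u \<Longrightarrow> x \<in> U"
  using names unfolding name_system_def by blast

lemma wf_dm: "wf {(x, u). u \<in> U \<and> x \<in> dm u}"
  using names unfolding name_system_def by blast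

lemma eqv_sym: "u \<in> U \<Longrightarrow> v \<in> U \<Longrightarrow> eqv u v = eqv v u"
  by (simp add: tv_Eqv inf_commute)

lemma val_inf_eqv_le_mem: "x \<in> U \<Longrightarrow> v \<in> U \<Longrightarrow> y \<in> dm v \<Longrightarrow> inf (val v y) (eqv y x) \<le> mem x v"
  by (simp add: tv_Mem) (rule SUP_upper)

lemma eqv_transfers_dm:
  assumes "u \<in> U" "v \<in> U" "x \<in> dm u"
  shows "inf (val u x) (eqv u v) \<le> mem x v"
proof -
  have "eqv u v \<le> himp (val u x) (mem x v)"
    using assms by (simp add: tv_Eqv) (meson INF_lower le_infI1)
  then have "inf (val u x) (eqv u v) \<le> inf (val u x) (himp (val u x) (mem x v))"
    by (rule inf_mono[OF order_refl])
  also have "\<dots> \<le> mem x v"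
    using heyting by (rule gen_heyting_inf_himp_le)
  finally show ?thesis .
qed

lemma mem_inf_leI:
  assumes "x \<in> U" "v \<in> U" "\<And>y. y \<in> dm v \<Longrightarrow> inf (inf (val v y) (eqv y x)) c \<le> d"
  shows "inf (mem x v) c \<le> d"
proof -
  have "inf (mem x v) c = inf c (SUP y\<in>dm v. inf (val v y) (eqv y x))"
    using assms(1,2) by (simp add: tv_Mem inf_commute)
  also have "\<dots> \<le> (SUP y\<in>dm v. inf c (inf (val v y) (eqv y x)))"
    using heyting by (rule gen_heyting_inf_SUP_le)
  also have "\<dots> \<le> d"
    using assms(3) by (simp add: SUP_least inf_commute)
  finally show ?thesis .
qed

lemma eqv_refl: "u \<in> U \<Longrightarrow> eqv u u = top"
proof (induction u rule: wf_induct[OF wf_dm])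
  case (1 u)
  have "val u x \<le> mem x u" if x: "x \<in> dm u" for x
    using 1 x val_inf_eqv_le_mem[OF dm_in_U[OF 1(2) x] 1(2) x] dm_in_U by auto
  then show ?case
    using 1(2) by (simp add: tv_Eqv top_le himp_greatest INF_greatest)
qed

lemma mem_eqv_left_if_trans:
  assumes "x \<in> U" "y \<in> U" "b \<in> U"
    and trans: "\<And>z. z \<in> dm b \<Longrightarrow> inf (eqv z y) (eqv y x) \<le> eqv z x"
  shows "inf (mem y b) (eqv y x) \<le> mem x b"
proof (rule mem_inf_leI[OF assms(2,3)])
  fix z assume z: "z \<in> dm b"
  have "inf (inf (val b z) (eqv z y)) (eqv y x) \<le> inf (val b z) (eqv z x)"
    unfolding inf_assoc by (rule inf_mono[OF order_refl trans[OF z]])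
  also have "\<dots> \<le> mem x b"
    by (rule val_inf_eqv_le_mem[OF assms(1,3) z])
  finally show "inf (inf (val b z) (eqv z y)) (eqv y x) \<le> mem x b" .
qed

text \<open>Transitivity is only required between elements of the three domains; this is what
  lets the well-founded induction in \<open>eqv_trans\<close> go through.\<close>

lemma inf_eqv_le_INF_himp_mem:
  assumes "u \<in> U" "v \<in> U" "w \<in> U"
    and trans: "\<And>x y z. x \<in> dm u \<Longrightarrow> y \<in> dm v \<Longrightarrow> z \<in> dm w \<Longrightarrow>
      inf (eqv z y) (eqv y x) \<le> eqv z x"
  shows "inf (eqv u v) (eqv v w) \<le> (INF x\<in>dm u. himp (val u x) (mem x w))"
proof (intro INF_greatest himp_greatest)
  fix x assume x: "x \<in> dm u"
  have "inf (val u x) (inf (eqv u v) (eqv v w)) \<le> inf (mem x v) (eqv v w)"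
    using eqv_transfers_dm[OF assms(1,2) x] by (metis inf_assoc inf_mono order_refl)
  also have "\<dots> \<le> mem x w"
  proof (rule mem_inf_leI[OF dm_in_U[OF assms(1) x] assms(2)])
    fix y assume y: "y \<in> dm v"
    have "inf (inf (val v y) (eqv y x)) (eqv v w) \<le> inf (mem y w) (eqv y x)"
      using eqv_transfers_dm[OF assms(2,3) y] by (meson inf_le1 inf_le2 le_inf_iff order_trans)
    also have "\<dots> \<le> mem x w"
      using dm_in_U assms trans x y by (intro mem_eqv_left_if_trans) blast+
    finally show "inf (inf (val v y) (eqv y x)) (eqv v w) \<le> mem x w" .
  qed
  finally show "inf (val u x) (inf (eqv u v) (eqv v w)) \<le> mem x w" .
qed

lemma eqv_trans: "u \<in> U \<Longrightarrow> v \<in> U \<Longrightarrow> w \<in> U \<Longrightarrow> inf (eqv u v) (eqv v w) \<le> eqv u w"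
proof (induction u arbitrary: v w rule: wf_induct[OF wf_dm])
  case (1 u)
  have IH: "inf (eqv x y) (eqv y z) \<le> eqv x z" if "x \<in> dm u" "y \<in> U" "z \<in> U" for x y z
    using 1 that dm_in_U by blast
  have "inf (eqv u v) (eqv v w) \<le> (INF x\<in>dm u. himp (val u x) (mem x w))"
  proof (rule inf_eqv_le_INF_himp_mem[OF 1(2-4)])
    fix x y z assume "x \<in> dm u" "y \<in> dm v" "z \<in> dm w"
    moreover from this have "eqv z y = eqv y z" "eqv y x = eqv x y" "eqv z x = eqv x z"
      using 1(2-4) dm_in_U eqv_sym by blast+
    ultimately show "inf (eqv z y) (eqv y x) \<le> eqv z x"
      using IH 1(3,4) dm_in_U by (simp add: inf_commute)
  qed
  moreover have "inf (eqv w v) (eqv v u) \<le> (INF x\<in>dm w. himp (val w x) (mem x u))"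
    using 1(2-4) IH dm_in_U by (intro inf_eqv_le_INF_himp_mem) blast+
  moreover have "inf (eqv w v) (eqv v u) = inf (eqv u v) (eqv v w)"
    using 1(2-4) eqv_sym by (simp add: inf_commute)
  ultimately show ?case
    using tv_Eqv[OF 1(2,4)] by simp
qed

lemma mem_eqv_left: "u \<in> U \<Longrightarrow> w \<in> U \<Longrightarrow> b \<in> U \<Longrightarrow> inf (mem u b) (eqv u w) \<le> mem w b"
  using eqv_trans dm_in_U by (intro mem_eqv_left_if_trans) blast+

lemma mem_eqv_right:
  assumes "a \<in> U" "u \<in> U" "v \<in> U"
  shows "inf (mem a u) (eqv u v) \<le> mem a v"
proof (rule mem_inf_leI[OF assms(1,2)])
  fix x assume x: "x \<in> dm u"
  have "inf (inf (val u x) (eqv x a)) (eqv u v) \<le> inf (mem x v) (eqv x a)"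
    using eqv_transfers_dm[OF assms(2,3) x] by (meson inf_le1 inf_le2 le_inf_iff order_trans)
  also have "\<dots> \<le> mem a v"
    by (rule mem_eqv_left[OF dm_in_U[OF assms(2) x] assms(1,3)])
  finally show "inf (inf (val u x) (eqv x a)) (eqv u v) \<le> mem a v" .
qed

lemma mem_cong:
  assumes "a \<in> U" "a' \<in> U" "b \<in> U" "b' \<in> U"
  shows "inf (inf (eqv a a') (eqv b b')) (mem a b) \<le> mem a' b'"
proof -
  have "inf (inf (eqv a a') (eqv b b')) (mem a b) \<le> inf (inf (mem a b) (eqv a a')) (eqv b b')"
    by (simp add: inf_aci)
  also have "\<dots> \<le> inf (mem a' b) (eqv b b')"
    using assms by (intro inf_mono mem_eqv_left order_refl)
  also have "\<dots> \<le> mem a' b'"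
    using assms by (intro mem_eqv_right)
  finally show ?thesis .
qed

lemma eqv_cong:
  assumes "a \<in> U" "a' \<in> U" "b \<in> U" "b' \<in> U"
  shows "inf (inf (eqv a a') (eqv b b')) (eqv a b) \<le> eqv a' b'"
proof -
  have "inf (inf (eqv a a') (eqv b b')) (eqv a b) = inf (inf (eqv a' a) (eqv a b)) (eqv b b')"
    using assms eqv_sym by (simp add: inf_aci)
  also have "\<dots> \<le> inf (eqv a' b) (eqv b b')"
    using assms by (intro inf_mono eqv_trans order_refl)
  also have "\<dots> \<le> eqv a' b'"
    using assms by (intro eqv_trans)
  finally show ?thesis .
qed

lemma tsubst_eqv:
  assumes "tvars s \<subseteq> {x}" "tconsts s \<subseteq> U" "u \<in> U" "v \<in> U"
  obtains a b where "tsubst x u s = Cst a" "tsubst x v s = Cst b" "a \<in> U" "b \<in> U"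
    "eqv u v \<le> eqv a b"
  using assms eqv_refl by (cases s) force+

definition leibniz :: "nat \<Rightarrow> 'n fm \<Rightarrow> bool" where
  "leibniz x \<phi> \<longleftrightarrow> (\<forall>u\<in>U. \<forall>v\<in>U. inf (eqv u v) (tv (subst x u \<phi>)) \<le> tv (subst x v \<phi>))"

lemma leibniz_not_free: "x \<notin> freevars \<phi> \<Longrightarrow> leibniz x \<phi>"
  by (simp add: leibniz_def subst_not_free)

lemma leibniz_Mem:
  assumes "freevars (Mem s t) \<subseteq> {x}" "fconsts (Mem s t) \<subseteq> U"
  shows "leibniz x (Mem s t)"
  unfolding leibniz_def
proof (intro ballI)
  fix u v assume uv: "u \<in> U" "v \<in> U"
  obtain a a' where
    s: "tsubst x u s = Cst a" "tsubst x v s = Cst a'" "a \<in> U" "a' \<in> U" "eqv u v \<le> eqv a a'"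
    by (rule tsubst_eqv[of s x u v]) (use assms uv in auto)
  obtain b b' where
    t: "tsubst x u t = Cst b" "tsubst x v t = Cst b'" "b \<in> U" "b' \<in> U" "eqv u v \<le> eqv b b'"
    by (rule tsubst_eqv[of t x u v]) (use assms uv in auto)
  have "inf (eqv u v) (mem a b) \<le> inf (inf (eqv a a') (eqv b b')) (mem a b)"
    using s t by (intro inf_mono) auto
  also have "\<dots> \<le> mem a' b'"
    using s t by (intro mem_cong)
  finally show "inf (eqv u v) (tv (subst x u (Mem s t))) \<le> tv (subst x v (Mem s t))"
    using s t by simp
qed

lemma leibniz_Eqv:
  assumes "freevars (Eqv s t) \<subseteq> {x}" "fconsts (Eqv s t) \<subseteq> U"
  shows "leibniz x (Eqv s t)"
  unfolding leibniz_def
proof (intro ballI)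
  fix u v assume uv: "u \<in> U" "v \<in> U"
  obtain a a' where
    s: "tsubst x u s = Cst a" "tsubst x v s = Cst a'" "a \<in> U" "a' \<in> U" "eqv u v \<le> eqv a a'"
    by (rule tsubst_eqv[of s x u v]) (use assms uv in auto)
  obtain b b' where
    t: "tsubst x u t = Cst b" "tsubst x v t = Cst b'" "b \<in> U" "b' \<in> U" "eqv u v \<le> eqv b b'"
    by (rule tsubst_eqv[of t x u v]) (use assms uv in auto)
  have "inf (eqv u v) (eqv a b) \<le> inf (inf (eqv a a') (eqv b b')) (eqv a b)"
    using s t by (intro inf_mono) auto
  also have "\<dots> \<le> eqv a' b'"
    using s t by (intro eqv_cong)
  finally show "inf (eqv u v) (tv (subst x u (Eqv s t))) \<le> tv (subst x v (Eqv s t))"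
    using s t by simp
qed

lemma leibniz_Conj:
  assumes "freevars a \<union> freevars b \<subseteq> {x}" "fconsts a \<union> fconsts b \<subseteq> U"
    and "leibniz x a" "leibniz x b"
  shows "leibniz x (Conj a b)"
  unfolding leibniz_def
proof (intro ballI)
  fix u v assume uv: "u \<in> U" "v \<in> U"
  have "inf (eqv u v) (inf (tv (subst x u a)) (tv (subst x u b)))
      = inf (inf (eqv u v) (tv (subst x u a))) (inf (eqv u v) (tv (subst x u b)))"
    by (simp add: inf_aci)
  also have "\<dots> \<le> inf (tv (subst x v a)) (tv (subst x v b))"
    using assms(3,4) uv unfolding leibniz_def by (blast intro: inf_mono)
  finally show "inf (eqv u v) (tv (subst x u (Conj a b))) \<le> tv (subst x v (Conj a b))"
    using uv by (simp only: tv_connectives[OF assms(1,2)])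
qed

lemma leibniz_Disj:
  assumes "freevars a \<union> freevars b \<subseteq> {x}" "fconsts a \<union> fconsts b \<subseteq> U"
    and "leibniz x a" "leibniz x b"
  shows "leibniz x (Disj a b)"
  unfolding leibniz_def
proof (intro ballI)
  fix u v assume uv: "u \<in> U" "v \<in> U"
  have "inf (eqv u v) (sup (tv (subst x u a)) (tv (subst x u b)))
      = sup (inf (eqv u v) (tv (subst x u a))) (inf (eqv u v) (tv (subst x u b)))"
    using heyting by (rule gen_heyting_inf_sup_distrib)
  also have "\<dots> \<le> sup (tv (subst x v a)) (tv (subst x v b))"
    using assms(3,4) uv unfolding leibniz_def by (blast intro: sup_mono)
  finally show "inf (eqv u v) (tv (subst x u (Disj a b))) \<le> tv (subst x v (Disj a b))"
    using uv by (simp only: tv_connectives[OF assms(1,2)])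
qed

lemma leibniz_Impl:
  assumes "freevars a \<union> freevars b \<subseteq> {x}" "fconsts a \<union> fconsts b \<subseteq> U"
    and "leibniz x a" "leibniz x b"
  shows "leibniz x (Impl a b)"
  unfolding leibniz_def
proof (intro ballI)
  fix u v assume uv: "u \<in> U" "v \<in> U"
  let ?e = "eqv u v" and ?h = "himp (tv (subst x u a)) (tv (subst x u b))"
  have "inf (eqv v u) (tv (subst x v a)) \<le> tv (subst x u a)"
    using assms(3) uv unfolding leibniz_def by blast
  then have a: "inf ?e (tv (subst x v a)) \<le> tv (subst x u a)"
    using eqv_sym[OF uv] by simp
  have "inf (tv (subst x v a)) (inf ?e ?h) = inf (inf ?e (tv (subst x v a))) (inf ?e ?h)"
    by (simp add: inf_aci)
  also have "\<dots> \<le> inf (tv (subst x u a)) (inf ?e ?h)"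
    using a by (rule inf_mono[OF _ order_refl])
  also have "\<dots> = inf ?e (inf (tv (subst x u a)) ?h)"
    by (simp add: inf_aci)
  also have "\<dots> \<le> inf ?e (tv (subst x u b))"
    using heyting by (intro inf_mono order_refl gen_heyting_inf_himp_le)
  also have "\<dots> \<le> tv (subst x v b)"
    using assms(4) uv unfolding leibniz_def by blast
  finally have "inf ?e ?h \<le> himp (tv (subst x v a)) (tv (subst x v b))"
    by (rule himp_greatest)
  then show "inf ?e (tv (subst x u (Impl a b))) \<le> tv (subst x v (Impl a b))"
    using uv by (simp only: tv_connectives[OF assms(1,2)])
qed

lemma leibniz_Ex:
  assumes "i \<noteq> x" "freevars p - {i} \<subseteq> {x}" "fconsts p \<subseteq> U"
    and "\<And>w. w \<in> U \<Longrightarrow> leibniz x (subst i w p)"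
  shows "leibniz x (Ex i p)"
  unfolding leibniz_def
proof (intro ballI)
  fix u v assume uv: "u \<in> U" "v \<in> U"
  have "inf (eqv u v) (SUP y\<in>U. tv (subst x u (subst i y p)))
      \<le> (SUP y\<in>U. inf (eqv u v) (tv (subst x u (subst i y p))))"
    using heyting by (rule gen_heyting_inf_SUP_le)
  also have "\<dots> \<le> (SUP y\<in>U. tv (subst x v (subst i y p)))"
    using assms(4) uv unfolding leibniz_def by (blast intro: SUP_mono)
  finally show "inf (eqv u v) (tv (subst x u (Ex i p))) \<le> tv (subst x v (Ex i p))"
    using uv by (simp only: tv_quantifiers[OF assms(1-3)])
qed

lemma leibniz_All:
  assumes "i \<noteq> x" "freevars p - {i} \<subseteq> {x}" "fconsts p \<subseteq> U"
    and "\<And>w. w \<in> U \<Longrightarrow> leibniz x (subst i w p)"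
  shows "leibniz x (All i p)"
  unfolding leibniz_def
proof (intro ballI)
  fix u v assume uv: "u \<in> U" "v \<in> U"
  have "inf (eqv u v) (INF y\<in>U. tv (subst x u (subst i y p))) \<le> (INF y\<in>U. tv (subst x v (subst i y p)))"
  proof (rule INF_greatest)
    fix y assume y: "y \<in> U"
    have "inf (eqv u v) (INF y\<in>U. tv (subst x u (subst i y p))) \<le> inf (eqv u v) (tv (subst x u (subst i y p)))"
      using y by (intro inf_mono order_refl INF_lower)
    also have "\<dots> \<le> tv (subst x v (subst i y p))"
      using assms(4)[OF y] uv unfolding leibniz_def by blast
    finally show "inf (eqv u v) (INF y\<in>U. tv (subst x u (subst i y p))) \<le> tv (subst x v (subst i y p))" .
  qed
  then show "inf (eqv u v) (tv (subst x u (All i p))) \<le> tv (subst x v (All i p))"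
    using uv by (simp only: tv_quantifiers[OF assms(1-3)])
qed

end

locale standard_leibniz_model = heyting_valued_model +
  assumes tv_Neg_funpow:
    "sentence U p \<Longrightarrow> \<not> is_neg p \<Longrightarrow> tv ((Neg ^^ n) p) = (if odd n then top else tv p)"
begin

lemma leibniz_Neg_funpow:
  assumes "freevars q \<subseteq> {x}" "fconsts q \<subseteq> U" "\<not> is_neg q" "leibniz x q"
  shows "leibniz x ((Neg ^^ n) q)"
proof -
  have "tv (subst x w ((Neg ^^ n) q)) = (if odd n then top else tv (subst x w q))" if "w \<in> U" for w
    using tv_Neg_funpow[OF subst_sentence[OF assms(1,2) that]] assms(3)
    by (simp add: subst_Neg_funpow is_neg_subst)
  then show ?thesis
    using assms(4) unfolding leibniz_def by simp
qed

theorem leibniz_law: "freevars \<phi> \<subseteq> {x} \<Longrightarrow> fconsts \<phi> \<subseteq> U \<Longrightarrow> leibniz x \<phi>"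
proof (induction "size \<phi>" arbitrary: \<phi> rule: less_induct)
  case less
  have IH: "leibniz x \<psi>" if "size \<psi> < size \<phi>" "freevars \<psi> \<subseteq> {x}" "fconsts \<psi> \<subseteq> U" for \<psi>
    using less.hyps that by blast
  have IH_subst: "leibniz x (subst i w p)"
    if "size p < size \<phi>" "freevars p - {i} \<subseteq> {x}" "fconsts p \<subseteq> U" "w \<in> U" for i w p
    using that subst_freevars[of i w p] subst_fconsts[of i w p] by (intro IH) (auto simp: size_subst)
  show ?case
  proof (cases \<phi>)
    case Mem
    then show ?thesis using less.prems leibniz_Mem by blast
  next
    case Eqv
    then show ?thesis using less.prems leibniz_Eqv by blast
  next
    case (Neg p)
    obtain n q where nq: "\<phi> = (Neg ^^ n) q" "\<not> is_neg q"
      using Neg_funpow_decomp by blast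
    with Neg have "size q < size \<phi>" by (cases n) auto
    with nq less.prems show ?thesis
      by (simp add: leibniz_Neg_funpow IH)
  next
    case (Ex i p)
    then show ?thesis
      using less.prems IH_subst by (cases "i = x") (auto intro: leibniz_not_free leibniz_Ex)
  next
    case (All i p)
    then show ?thesis
      using less.prems IH_subst by (cases "i = x") (auto intro: leibniz_not_free leibniz_All)
  qed (use less.prems IH in \<open>auto intro: leibniz_Conj leibniz_Disj leibniz_Impl\<close>)
qed

end

theorem theorem4p1:
  fixes N :: "'a::complete_lattice \<Rightarrow> 'a set"
    and U :: "'n set" and dm :: "'n \<Rightarrow> 'n set" and val :: "'n \<Rightarrow> 'n \<Rightarrow> 'a"
    and tv :: "'n fm \<Rightarrow> 'a"
  assumes "C_omega N" and "saturated N"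
    and "standard_leibniz N U dm val tv"
    and "freevars \<phi> \<subseteq> {x}" and "fconsts \<phi> \<subseteq> U"
    and "u \<in> U" and "v \<in> U"
  shows "inf (tv (Eqv (Cst u) (Cst v))) (tv (subst x u \<phi>)) \<le> tv (subst x v \<phi>)"
proof -
  interpret standard_leibniz_model N U dm val tv
    using assms(3) unfolding standard_leibniz_def C_omega_def
    by unfold_locales blast+
  show ?thesis
    using leibniz_law[OF assms(4,5)] assms(6,7) unfolding leibniz_def by blast
qed

end
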